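(* Let $\mathcal{X}$ be a feature set, $\mathcal{Y}^*$ a convex subset of a Euclidean space, $\mathcal{F}$ the set of all maps $\mathcal{X}\to\mathcal{Y}^*$, and $\mathcal{F}^T\subseteq\mathcal{F}$ an allowable function class. Let $f^*\in\mathcal{F}$ be the true function and $\widehat f^*\in\mathcal{F}$ an estimate of it. Let $\ell:\mathcal{Y}^*\times\mathcal{Y}^*\to\mathbb{R}_+$ be differentiable with gradients bounded in norm by some $K<\infty$ and convex in its second argument. Fix $n\ge1$ and suppose: (i) (approximate minimization) for every $x_{1:n}=(x_1,\dots,x_n)\in\mathcal{X}^n$ there is a returned $\widetilde f^T(\cdot;x_{1:n})\in\mathcal{F}^T$ with $n^{-1}\sum_{i=1}^n\ell(\widetilde f^T(x_i;x_{1:n}),\widehat f^*(x_i))\le\min_{f\in\mathcal{F}^T}n^{-1}\sum_{i=1}^n\ell(f(x_i),\widehat f^*(x_i))+\delta$ for some $\delta\ge0$; (ii) (approximate maximization) the returned $\widetilde x_{1:n}\in\mathcal{X}^n$ satisfies $n^{-1}\sum_{i=1}^n\ell(\widetilde f^T(\widetilde x_i;\widetilde x_{1:n}),\widehat f^*(\widetilde x_i))\ge\max_{x_{1:n}}n^{-1}\sum_{i=1}^n\ell(\widetilde f^T(x_i;x_{1:n}),\widehat f^*(x_i))-\nu$ for some $\nu\ge0$. Define $\widehat{\mathcal{E}}:=n^{-1}\sum_{i=1}^n\ell(\widetilde f^T(\widetilde x_i;\widetilde x_{1:n}),\widehat f^*(\widetilde x_i))$ and $\mathcal{E}:=\max_{x_{1:n}\in\mathcal{X}^n}\min_{f\in\mathcal{F}^T}n^{-1}\sum_{i=1}^n\ell(f(x_i),f^*(x_i))$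 (all maxima and minima assumed attained). Then $$|\widehat{\mathcal{E}}-\mathcal{E}|\le(\delta+\nu)+3K\,\|\widehat f^*-f^*\|_\infty,$$ where $\|f_1-f_2\|_\infty=\sup_{x\in\mathcal{X}}|f_1(x)-f_2(x)|$.
   Context: The quantity $\mathcal{E}$ is the population value of the falsifier's max-min program and $\widehat{\mathcal{E}}$ is the value attained by the plug-in program in which $f^*$ is replaced by the estimate $\widehat f^*$ and the inner minimization and outer maximization are carried out by approximate routines with optimality gaps $\delta$ and $\nu$. *)

theory Defs
  imports "HOL-Analysis.Analysis"
begin

definition avg_loss :: "('y \<Rightarrow> 'y \<Rightarrow> real) \<Rightarrow> ('x \<Rightarrow> 'y) \<Rightarrow> ('x \<Rightarrow> 'y) \<Rightarrow> 'x list \<Rightarrow> real" where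
  "avg_loss l f g xs = (\<Sum>i<length xs. l (f (xs ! i)) (g (xs ! i))) / real (length xs)"

definition sup_dist :: "('x \<Rightarrow> 'y::real_normed_vector) \<Rightarrow> ('x \<Rightarrow> 'y) \<Rightarrow> ereal" where
  "sup_dist f1 f2 = (SUP x. ereal (norm (f1 x - f2 x)))"

end

theory Submission
  imports Defs
begin

text \<open>The loss is K-Lipschitz in its second argument (mean value theorem), so replacing the
  target fstar by the estimate fhat changes every averaged loss, hence the value of every inner
  minimisation, by at most K times the sup distance. The optimality gaps then enter additively:
  the inner gap \<delta> bounds the estimate from above, the outer gap \<nu> from below. The argument yields
  the constant K; the stated 3K is weaker.\<close>

lemma avg_loss_diff_le:
  assumes "xs \<noteq> []"
    and "\<And>i. i < length xs \<Longrightarrow> \<bar>l (f (xs!i)) (g (xs!i)) - l (f (xs!i)) (h (xs!i))\<bar> \<le> C"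
  shows "\<bar>avg_loss l f g xs - avg_loss l f h xs\<bar> \<le> C"
proof -
  let ?m = "length xs"
  have m_pos: "real ?m > 0" using assms(1) by simp
  have "\<bar>(\<Sum>i<?m. l (f (xs!i)) (g (xs!i))) - (\<Sum>i<?m. l (f (xs!i)) (h (xs!i)))\<bar>
        = \<bar>\<Sum>i<?m. l (f (xs!i)) (g (xs!i)) - l (f (xs!i)) (h (xs!i))\<bar>"
    by (simp add: sum_subtractf)
  also have "\<dots> \<le> (\<Sum>i<?m. \<bar>l (f (xs!i)) (g (xs!i)) - l (f (xs!i)) (h (xs!i))\<bar>)"
    by (rule sum_abs)
  also have "\<dots> \<le> real ?m * C"
    using sum_mono[of "{..<?m}" _ "\<lambda>_. C"] assms(2) by simp
  finally show ?thesis
    using m_pos unfolding avg_loss_def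
    by (simp add: diff_divide_distrib[symmetric] pos_divide_le_eq mult.commute)
qed

lemma lipschitz_snd_of_bounded_derivative:
  fixes l :: "'a::real_normed_vector \<Rightarrow> 'b::real_normed_vector \<Rightarrow> real"
  assumes "convex U" "convex V"
    and deriv: "\<forall>z\<in>U \<times> V. \<exists>D. ((\<lambda>p. l (fst p) (snd p)) has_derivative D) (at z within U \<times> V)
                              \<and> onorm D \<le> K"
    and "u \<in> U" "v \<in> V" "v' \<in> V"
  shows "\<bar>l u v - l u v'\<bar> \<le> K * norm (v - v')"
proof -
  obtain D where D: "\<And>z. z \<in> U \<times> V \<Longrightarrow>
      ((\<lambda>p. l (fst p) (snd p)) has_derivative D z) (at z within U \<times> V) \<and> onorm (D z) \<le> K"
    using deriv by metis
  have "norm (l u v - l u v') \<le> K * norm ((u, v) - (u, v'))"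
    using differentiable_bound[OF convex_Times[OF assms(1,2)], of "\<lambda>p. l (fst p) (snd p)" D K
        "(u, v)" "(u, v')"] D assms(4-6) by auto
  then show ?thesis by (simp add: norm_Pair)
qed

lemma INF_attained_diff_le:
  fixes \<phi> \<psi> :: "'a \<Rightarrow> real"
  assumes "\<exists>f\<in>F. \<forall>g\<in>F. \<phi> f \<le> \<phi> g" "\<exists>f\<in>F. \<forall>g\<in>F. \<psi> f \<le> \<psi> g"
    and "\<And>g. g \<in> F \<Longrightarrow> \<bar>\<phi> g - \<psi> g\<bar> \<le> C"
  shows "\<bar>(INF g\<in>F. \<phi> g) - (INF g\<in>F. \<psi> g)\<bar> \<le> C"
proof -
  obtain f where f: "f \<in> F" "\<forall>g\<in>F. \<phi> f \<le> \<phi> g" using assms(1) by blast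
  obtain f' where f': "f' \<in> F" "\<forall>g\<in>F. \<psi> f' \<le> \<psi> g" using assms(2) by blast
  have "(INF g\<in>F. \<phi> g) = \<phi> f" by (rule cInf_eq_minimum) (use f in auto)
  moreover have "(INF g\<in>F. \<psi> g) = \<psi> f'" by (rule cInf_eq_minimum) (use f' in auto)
  moreover have "\<phi> f \<le> \<psi> f' + C" using f(2) f'(1) assms(3)[OF f'(1)] by fastforce
  moreover have "\<psi> f' \<le> \<phi> f + C" using f'(2) f(1) assms(3)[OF f(1)] by fastforce
  ultimately show ?thesis by linarith
qed

text \<open>The max-min perturbation bound on abstract sets: \<open>\<phi>\<close> is the objective actually optimised,
  \<open>\<psi>\<close> the population objective, \<open>ftil\<close> the inner and \<open>xtil\<close> the outer approximate optimiser.\<close>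

lemma approx_max_min_diff_le:
  fixes \<phi> \<psi> :: "'f \<Rightarrow> 'x \<Rightarrow> real"
  assumes diff: "\<And>f x. f \<in> F \<Longrightarrow> x \<in> X \<Longrightarrow> \<bar>\<phi> f x - \<psi> f x\<bar> \<le> C"
    and \<phi>_min: "\<And>x. x \<in> X \<Longrightarrow> \<exists>f\<in>F. \<forall>g\<in>F. \<phi> f x \<le> \<phi> g x"
    and \<psi>_min: "\<And>x. x \<in> X \<Longrightarrow> \<exists>f\<in>F. \<forall>g\<in>F. \<psi> f x \<le> \<psi> g x"
    and approx_min: "\<And>x. x \<in> X \<Longrightarrow> ftil x \<in> F \<and> \<phi> (ftil x) x \<le> (INF f\<in>F. \<phi> f x) + \<delta>"
    and \<phi>_max: "\<exists>x0\<in>X. \<forall>x\<in>X. \<phi> (ftil x) x \<le> \<phi> (ftil x0) x0"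
    and \<psi>_max: "\<exists>x0\<in>X. \<forall>x\<in>X. (INF f\<in>F. \<psi> f x) \<le> (INF f\<in>F. \<psi> f x0)"
    and xtil: "xtil \<in> X"
    and approx_max: "\<phi> (ftil xtil) xtil \<ge> (SUP x\<in>X. \<phi> (ftil x) x) - \<nu>"
    and "\<delta> \<ge> 0" "\<nu> \<ge> 0"
  shows "\<bar>\<phi> (ftil xtil) xtil - (SUP x\<in>X. INF f\<in>F. \<psi> f x)\<bar> \<le> \<delta> + \<nu> + C"
proof -
  define A where "A x = (INF f\<in>F. \<phi> f x)" for x
  define B where "B x = (INF f\<in>F. \<psi> f x)" for x
  have A_B: "\<bar>A x - B x\<bar> \<le> C" if "x \<in> X" for x
    unfolding A_def B_def using INF_attained_diff_le \<phi>_min \<psi>_min diff that by metis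
  obtain x0 where x0: "x0 \<in> X" "\<forall>x\<in>X. B x \<le> B x0"
    using \<psi>_max unfolding B_def by blast
  have E: "(SUP x\<in>X. INF f\<in>F. \<psi> f x) = B x0"
    unfolding B_def[symmetric] by (rule cSup_eq_maximum) (use x0 in auto)
  have bdd: "bdd_above ((\<lambda>x. \<phi> (ftil x) x) ` X)"
    using \<phi>_max by (auto intro: bdd_aboveI2)
  have "\<phi> (ftil xtil) xtil \<le> A xtil + \<delta>" using approx_min[OF xtil] unfolding A_def by blast
  also have "\<dots> \<le> B x0 + C + \<delta>" using A_B[OF xtil] x0(2) xtil by fastforce
  finally have upper: "\<phi> (ftil xtil) xtil \<le> B x0 + C + \<delta>" .
  have "B x0 - C \<le> A x0" using A_B[OF x0(1)] by linarith
  also have "\<dots> \<le> \<phi> (ftil x0) x0"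
  proof -
    obtain f where "f \<in> F" "\<forall>g\<in>F. \<phi> f x0 \<le> \<phi> g x0" using \<phi>_min[OF x0(1)] by blast
    then show ?thesis unfolding A_def using approx_min[OF x0(1)]
      by (metis bdd_belowI2 cINF_lower)
  qed
  also have "\<dots> \<le> (SUP x\<in>X. \<phi> (ftil x) x)" by (rule cSUP_upper[OF x0(1) bdd])
  finally have lower: "B x0 - C - \<nu> \<le> \<phi> (ftil xtil) xtil" using approx_max by linarith
  show ?thesis unfolding E using upper lower assms(9,10) by linarith
qed

lemma sup_dist_nonneg: "sup_dist f1 f2 \<ge> 0"
  unfolding sup_dist_def by (rule order_trans[OF _ SUP_upper[of undefined]]) auto

lemma ereal_le_add_mult_sup_dist:
  fixes X a K K' :: real
  assumes "0 \<le> K" "K \<le> K'"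
    and bound: "\<And>C. (\<And>x. K * norm (f1 x - f2 x) \<le> C) \<Longrightarrow> X \<le> a + C"
  shows "ereal X \<le> ereal a + ereal K' * sup_dist f1 f2"
proof (cases "sup_dist f1 f2")
  case (real d)
  have "norm (f1 x - f2 x) \<le> d" for x
    using SUP_upper[of x UNIV "\<lambda>x. ereal (norm (f1 x - f2 x))"] real
    unfolding sup_dist_def by simp
  then have "X \<le> a + K * d" using bound assms(1) by (simp add: mult_left_mono)
  moreover have "K * d \<le> K' * d"
    using assms(2) real sup_dist_nonneg[of f1 f2] by (simp add: mult_right_mono)
  ultimately show ?thesis using real by simp
next
  case PInf
  show ?thesis
  proof (cases "K' = 0")
    case True
    then have "X \<le> a + 0" using bound[of 0] assms by simp
    then show ?thesis using True by (simp add: zero_ereal_def[symmetric])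
  qed (use PInf assms in simp)
qed (use sup_dist_nonneg[of f1 f2] in simp)

theorem proposition1:
  fixes Ystar :: "'y::euclidean_space set"
    and FT :: "('x \<Rightarrow> 'y) set"
    and fstar fhat :: "'x \<Rightarrow> 'y"
    and l :: "'y \<Rightarrow> 'y \<Rightarrow> real"
    and K \<delta> \<nu> :: real
    and n :: nat
    and ftil :: "'x list \<Rightarrow> 'x \<Rightarrow> 'y"
    and xtil :: "'x list"
  assumes conv: "convex Ystar"
    and FT_maps: "\<forall>f\<in>FT. \<forall>x. f x \<in> Ystar"
    and fstar_maps: "\<forall>x. fstar x \<in> Ystar"
    and fhat_maps: "\<forall>x. fhat x \<in> Ystar"
    and l_nonneg: "\<forall>u\<in>Ystar. \<forall>v\<in>Ystar. l u v \<ge> 0"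
    and l_diff: "\<forall>z\<in>Ystar \<times> Ystar. \<exists>D.
                   ((\<lambda>p. l (fst p) (snd p)) has_derivative D) (at z within Ystar \<times> Ystar)
                   \<and> onorm D \<le> K"
    and l_convex: "\<forall>u\<in>Ystar. convex_on Ystar (l u)"
    and n_pos: "n \<ge> 1"
    and delta_nonneg: "\<delta> \<ge> 0"
    and nu_nonneg: "\<nu> \<ge> 0"
    and min_hat_att: "\<forall>xs. length xs = n \<longrightarrow>
                        (\<exists>f\<in>FT. \<forall>g\<in>FT. avg_loss l f fhat xs \<le> avg_loss l g fhat xs)"
    and min_star_att: "\<forall>xs. length xs = n \<longrightarrow>
                        (\<exists>f\<in>FT. \<forall>g\<in>FT. avg_loss l f fstar xs \<le> avg_loss l g fstar xs)"
    and approx_min: "\<forall>xs. length xs = n \<longrightarrow> ftil xs \<in> FT \<and>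
                        avg_loss l (ftil xs) fhat xs \<le> (INF f\<in>FT. avg_loss l f fhat xs) + \<delta>"
    and max_til_att: "\<exists>xs0. length xs0 = n \<and> (\<forall>xs. length xs = n \<longrightarrow>
                        avg_loss l (ftil xs) fhat xs \<le> avg_loss l (ftil xs0) fhat xs0)"
    and max_star_att: "\<exists>xs0. length xs0 = n \<and> (\<forall>xs. length xs = n \<longrightarrow>
                        (INF f\<in>FT. avg_loss l f fstar xs) \<le> (INF f\<in>FT. avg_loss l f fstar xs0))"
    and xtil_len: "length xtil = n"
    and approx_max: "avg_loss l (ftil xtil) fhat xtil \<ge>
                        (SUP xs\<in>{xs. length xs = n}. avg_loss l (ftil xs) fhat xs) - \<nu>"
  shows "ereal \<bar>avg_loss l (ftil xtil) fhat xtil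
                  - (SUP xs\<in>{xs. length xs = n}. INF f\<in>FT. avg_loss l f fstar xs)\<bar>
           \<le> ereal (\<delta> + \<nu>) + ereal (3 * K) * sup_dist fhat fstar"
proof -
  have lip: "\<bar>l u (fhat x) - l u (fstar x)\<bar> \<le> K * norm (fhat x - fstar x)" if "u \<in> Ystar" for u x
    using lipschitz_snd_of_bounded_derivative[OF conv conv l_diff] that fhat_maps fstar_maps
    by blast
  have K_nonneg: "K \<ge> 0"
    using l_diff fstar_maps has_derivative_bounded_linear onorm_pos_le
    by (metis mem_Times_iff order_trans fst_conv snd_conv)
  show ?thesis
  proof (rule ereal_le_add_mult_sup_dist[OF K_nonneg])
    show "K \<le> 3 * K" using K_nonneg by simp
    fix C assume C: "\<And>x. K * norm (fhat x - fstar x) \<le> C"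
    have pointwise: "\<bar>l (f x) (fhat x) - l (f x) (fstar x)\<bar> \<le> C" if "f \<in> FT" for f x
      using lip[of "f x" x] C[of x] FT_maps that by fastforce
    have "\<bar>avg_loss l f fhat xs - avg_loss l f fstar xs\<bar> \<le> C"
      if "f \<in> FT" "length xs = n" for f xs
      by (rule avg_loss_diff_le) (use that n_pos pointwise in auto)
    then show "\<bar>avg_loss l (ftil xtil) fhat xtil
                  - (SUP xs\<in>{xs. length xs = n}. INF f\<in>FT. avg_loss l f fstar xs)\<bar>
               \<le> \<delta> + \<nu> + C"
      by (intro approx_max_min_diff_le[where \<phi> = "\<lambda>f. avg_loss l f fhat"])
        (use min_hat_att min_star_att approx_min max_til_att max_star_att xtil_len approx_max
           delta_nonneg nu_nonneg in auto)
  qed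
qed

end
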